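(* Let $d\ge1$ and $1\le e\le d$ be integers, let $I\subset\mathbb{Z}^e$ be a finite index set, and let $\Lambda: I-I:=\{i-j:\ i,j\in I\}\to[0,1]$ be a neighborhood function with $\Lambda(k)=\Lambda(-k)$ and $\Lambda(0)=1$. Let $\delta>0$ and $$D^\delta_I:=\left\{x=(x_i)_{i\in I}\in\left([0,1]^d\right)^I:\ \Vert x_i-x_j\Vert\ge\delta \text{ whenever } i\neq j\right\}$$ (assumed nonempty), with $\Vert\cdot\Vert$ the Euclidean norm. For $x\in([0,1]^d)^I$ let $(C_i(x))_{i\in I}$ be the Voronoi partition of $[0,1]^d$: $C_i(x)$ consists of the $\omega\in[0,1]^d$ with $\Vert x_i-\omega\Vert<\Vert x_k-\omega\Vert$ for all $k\neq i$, ties being assigned to a single cell according to the lexicographical order on $I$. Let $\omega_1,\omega_2,\dots$ be i.i.d. random vectors in $[0,1]^d$ with law $P$, where $P$ has a density with respect to Lebesgue measure bounded by a constant $B>0$. Define the theoretical distortion $$V(x)=\frac12\sum_{i,j\in I}\Lambda(i-j)\int_{C_i(x)}\Vert x_j-\omega\Vert^2\,dP(\omega)$$ and the empirical distortion $$V_n(x)=\frac{1}{2n}\sum_{i\in I}\ \sum_{1\le m\le n:\ \omega_m\in C_i(x)}\ \sum_{j\in I}\Lambda(i-j)\Vert x_j-\omega_m\Vert^2 .$$ Let $\beta:\mathbb{N}^*\to(0,\infty)$ satisfy $\beta(n)\to\infty$, and let $$\bar\chi^\beta_n:=\left\{x\in D^\delta_I:\ V_n(x)<\inf_{z\in D^\delta_I}V_n(z)+\frac{1}{\beta(n)}\right\},\qquad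 \bar\chi:=\arg\min_{x\in D^\delta_I}V(x).$$ Then for every neighborhood $\mathcal N$ of $\bar\chi$ (in $D^\delta_I$), almost surely $\bar\chi^\beta_n\subset\mathcal N$ for all sufficiently large $n$; that is, the maps that almost minimize the empirical distortion converge almost surely to the set of minimizers of the theoretical distortion (strong consistency).
   Context: $\bar\chi^\beta_n$ is the (random) set of maps almost minimizing the empirical distortion; $\bar\chi$ is the set of maps minimizing the theoretical distortion over $D^\delta_I$. *)

theory Defs
  imports "HOL-Probability.Probability" "HOL-Library.List_Lexorder"
begin

text \<open>Indices in Z^e are represented as integer lists of length e; the
lexicographic order on lists (List_Lexorder) is used for tie-breaking.\<close>

definition idx_diff :: "int list \<Rightarrow> int list \<Rightarrow> int list" where
  "idx_diff i j = map2 (-) i j"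

definition idx_neg :: "int list \<Rightarrow> int list" where
  "idx_neg k = map uminus k"

definition diff_set :: "int list set \<Rightarrow> int list set" where
  "diff_set I = {idx_diff i j | i j. i \<in> I \<and> j \<in> I}"

definition unit_cube :: "(real ^ 'd) set" where
  "unit_cube = cbox 0 One"

text \<open>Configurations x = (x_i)_{i in I}, as functions that are 0 outside I.\<close>
definition D_delta :: "int list set \<Rightarrow> real \<Rightarrow> (int list \<Rightarrow> real ^ 'd) set" where
  "D_delta I \<delta> = {x. (\<forall>i\<in>I. x i \<in> unit_cube) \<and> (\<forall>i. i \<notin> I \<longrightarrow> x i = 0)
       \<and> (\<forall>i\<in>I. \<forall>j\<in>I. i \<noteq> j \<longrightarrow> dist (x i) (x j) \<ge> \<delta>)}"

definition voronoi_cell :: "int list set \<Rightarrow> (int list \<Rightarrow> real ^ 'd) \<Rightarrow> int list \<Rightarrow> (real ^ 'd) set" where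
  "voronoi_cell I x i = {\<omega> \<in> unit_cube. \<forall>k\<in>I. k \<noteq> i \<longrightarrow>
      (norm (x i - \<omega>) < norm (x k - \<omega>) \<or> (norm (x i - \<omega>) = norm (x k - \<omega>) \<and> i < k))}"

definition distortion ::
  "int list set \<Rightarrow> (int list \<Rightarrow> real) \<Rightarrow> (real ^ 'd) measure \<Rightarrow> (int list \<Rightarrow> real ^ 'd) \<Rightarrow> real" where
  "distortion I \<Lambda> P x = (1/2) * (\<Sum>i\<in>I. \<Sum>j\<in>I. \<Lambda> (idx_diff i j) *
      (LINT \<omega>:voronoi_cell I x i|P. (norm (x j - \<omega>))\<^sup>2))"

definition emp_distortion ::
  "int list set \<Rightarrow> (int list \<Rightarrow> real) \<Rightarrow> (nat \<Rightarrow> real ^ 'd) \<Rightarrow> nat \<Rightarrow> (int list \<Rightarrow> real ^ 'd) \<Rightarrow> real" where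
  "emp_distortion I \<Lambda> w n x = (1 / (2 * real n)) * (\<Sum>i\<in>I.
      \<Sum>m\<in>{m\<in>{1..n}. w m \<in> voronoi_cell I x i}. \<Sum>j\<in>I. \<Lambda> (idx_diff i j) * (norm (x j - w m))\<^sup>2)"

definition almost_min_set ::
  "int list set \<Rightarrow> real \<Rightarrow> (int list \<Rightarrow> real) \<Rightarrow> (nat \<Rightarrow> real ^ 'd) \<Rightarrow> (nat \<Rightarrow> real) \<Rightarrow> nat
     \<Rightarrow> (int list \<Rightarrow> real ^ 'd) set" where
  "almost_min_set I \<delta> \<Lambda> w \<beta> n = {x \<in> D_delta I \<delta>.
      emp_distortion I \<Lambda> w n x < (INF z\<in>D_delta I \<delta>. emp_distortion I \<Lambda> w n z) + 1 / \<beta> n}"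

definition argmin_set ::
  "int list set \<Rightarrow> real \<Rightarrow> (int list \<Rightarrow> real) \<Rightarrow> (real ^ 'd) measure \<Rightarrow> (int list \<Rightarrow> real ^ 'd) set" where
  "argmin_set I \<delta> \<Lambda> P = {x \<in> D_delta I \<delta>. \<forall>z\<in>D_delta I \<delta>. distortion I \<Lambda> P x \<le> distortion I \<Lambda> P z}"

end

theory Submission
  imports Defs
begin

text \<open>Both distortions are averages of one bounded measurable loss: \<open>V\<close> is half its \<open>P\<close>-integral
  and \<open>V\<^sub>n\<close> half its sample mean, so the strong law of large numbers (here via Hoeffding's
  inequality and Borel--Cantelli) gives \<open>V\<^sub>n x \<rightarrow> V x\<close> almost surely for each fixed \<open>x\<close>.
  Moving every site of \<open>x\<^sub>0\<close> by less than \<open>r\<close> changes the loss by \<open>O(r)\<close>, except on points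
  nearly equidistant from two sites of \<open>x\<^sub>0\<close>; these lie close to finitely many hyperplanes,
  a set of small \<open>P\<close>-measure because \<open>P\<close> is absolutely continuous. The same estimate holds
  for the empirical measure, so \<open>V\<close> is continuous and, covering the compact set \<open>D\<^sup>\<delta>\<^sub>I\<close> by
  finitely many such neighbourhoods, \<open>V\<^sub>n \<rightarrow> V\<close> uniformly almost surely. Uniform convergence
  to a continuous function on a compact set forces the almost minimizers into every
  neighbourhood of the minimizers.\<close>

definition sample_mean :: "(nat \<Rightarrow> 'a) \<Rightarrow> nat \<Rightarrow> ('a \<Rightarrow> real) \<Rightarrow> real" where
  "sample_mean w n h = (\<Sum>m\<in>{1..n}. h (w m)) / n"

lemma sample_mean_abs_diff_le:
  assumes "\<And>y. \<bar>g y - h y\<bar> \<le> b y"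
  shows "\<bar>sample_mean w n g - sample_mean w n h\<bar> \<le> sample_mean w n b"
proof -
  have "\<bar>sample_mean w n g - sample_mean w n h\<bar>
      = \<bar>\<Sum>m\<in>{1..n}. g (w m) - h (w m)\<bar> / n"
    by (simp add: sample_mean_def sum_subtractf diff_divide_distrib[symmetric])
  also have "\<dots> \<le> (\<Sum>m\<in>{1..n}. b (w m)) / n"
    using assms by (intro divide_right_mono order_trans[OF sum_abs] sum_mono) auto
  finally show ?thesis by (simp add: sample_mean_def)
qed

lemma sample_mean_nonneg: "(\<And>y. 0 \<le> h y) \<Longrightarrow> 0 \<le> sample_mean w n h"
  unfolding sample_mean_def by (intro divide_nonneg_nonneg sum_nonneg) auto

locale iid_sequence = prob_space M for M :: "'s measure" +
  fixes X :: "nat \<Rightarrow> 's \<Rightarrow> 'b::topological_space" and P :: "'b measure"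
  assumes indep_X: "indep_vars (\<lambda>_. borel) X UNIV"
    and distr_X: "\<And>m. distr M borel (X m) = P"
begin

lemma measurable_X [measurable]: "X m \<in> borel_measurable M"
  using indep_X unfolding indep_vars_def by auto

lemma prob_sample_mean_deviation_le:
  fixes h :: "'b \<Rightarrow> real"
  assumes h [measurable]: "h \<in> borel_measurable borel" and h_range: "\<And>y. h y \<in> {a..b}"
    and "a < b" "\<epsilon> > 0"
  shows "prob {s\<in>space M. \<epsilon> \<le> \<bar>sample_mean (\<lambda>m. X m s) n h - integral\<^sup>L P h\<bar>}
           \<le> 2 * exp (- 2 * \<epsilon>\<^sup>2 / (b - a)\<^sup>2) ^ n"
proof (cases "n = 0")
  case True
  then show ?thesis by (simp add: order_trans[OF prob_le_1])
next
  case False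
  have distr_hX: "distr M borel (\<lambda>s. h (X m s)) = distr P borel h" for m
    by (subst distr_X[symmetric], subst distr_distr) (auto simp: comp_def)
  interpret H: Hoeffding_ineq_iid M "{1..n}" "\<lambda>m s. h (X m s)" "\<lambda>s. h (X 1 s)" a b
    "expectation (\<lambda>s. h (X 1 s))"
  proof unfold_locales
    show "indep_vars (\<lambda>_. borel) (\<lambda>m s. h (X m s)) {1..n}"
      by (rule indep_vars_compose2[where X=X, OF indep_vars_subset[OF indep_X]]) auto
    show "distr M borel (\<lambda>s. h (X m s)) = distr M borel (\<lambda>s. h (X 1 s))" for m
      unfolding distr_hX ..
    show "AE s in M. h (X 1 s) \<in> {a..b}"
      using h_range by simp
  qed auto
  have mean: "expectation (\<lambda>s. h (X 1 s)) = integral\<^sup>L P h"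
    by (subst distr_X[symmetric, of 1], subst integral_distr) auto
  have "prob {s\<in>space M. \<epsilon> \<le> \<bar>sample_mean (\<lambda>m. X m s) n h - integral\<^sup>L P h\<bar>}
      \<le> 2 * exp (- 2 * real n * \<epsilon>\<^sup>2 / (b - a)\<^sup>2)"
    using H.Hoeffding_ineq_abs_ge'[of \<epsilon>] \<open>a < b\<close> \<open>\<epsilon> > 0\<close> False
    unfolding mean by (simp add: sample_mean_def)
  also have "exp (- 2 * real n * \<epsilon>\<^sup>2 / (b - a)\<^sup>2) = exp (- 2 * \<epsilon>\<^sup>2 / (b - a)\<^sup>2) ^ n"
    unfolding exp_of_nat_mult[symmetric] by (rule arg_cong[where f=exp]) simp
  finally show ?thesis .
qed

lemma AE_eventually_sample_mean_close:
  fixes h :: "'b \<Rightarrow> real"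
  assumes h [measurable]: "h \<in> borel_measurable borel" and h_bound: "\<And>y. \<bar>h y\<bar> \<le> c"
    and "\<epsilon> > 0"
  shows "AE s in M. eventually (\<lambda>n. \<bar>sample_mean (\<lambda>m. X m s) n h - integral\<^sup>L P h\<bar> < \<epsilon>) sequentially"
proof -
  define E where "E n = {s\<in>space M. \<epsilon> \<le> \<bar>sample_mean (\<lambda>m. X m s) n h - integral\<^sup>L P h\<bar>}" for n
  define q where "q = exp (- 2 * \<epsilon>\<^sup>2 / (c + 1 - (- c - 1))\<^sup>2)"
  have "-c - 1 < c + 1" using h_bound[of undefined] by linarith
  moreover have "h y \<in> {-c - 1..c + 1}" for y using h_bound[of y] by auto
  ultimately have "measure M (E n) \<le> 2 * q ^ n" for n
    unfolding E_def q_def using prob_sample_mean_deviation_le[OF h] \<open>\<epsilon> > 0\<close> by blast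
  moreover have "norm q < 1" using \<open>\<epsilon> > 0\<close> \<open>-c - 1 < c + 1\<close> by (simp add: q_def)
  ultimately have "summable (\<lambda>n. measure M (E n))"
    by (intro summable_comparison_test[OF _ summable_mult[OF summable_geometric]]) auto
  moreover have [measurable]: "E n \<in> sets M" for n unfolding E_def sample_mean_def by measurable
  ultimately have "AE s in M. eventually (\<lambda>n. s \<in> space M - E n) sequentially"
    by (intro borel_cantelli_AE1) (auto simp: emeasure_eq_measure)
  then show ?thesis
    by (rule eventually_mono) (auto elim!: eventually_mono simp: E_def not_le)
qed

theorem AE_sample_mean_tendsto:
  fixes h :: "'b \<Rightarrow> real"
  assumes h [measurable]: "h \<in> borel_measurable borel" and h_bound: "\<And>y. \<bar>h y\<bar> \<le> c"
  shows "AE s in M. (\<lambda>n. sample_mean (\<lambda>m. X m s) n h) \<longlonglongrightarrow> integral\<^sup>L P h"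
proof -
  have "AE s in M. \<forall>k::nat. eventually
      (\<lambda>n. \<bar>sample_mean (\<lambda>m. X m s) n h - integral\<^sup>L P h\<bar> < 1 / Suc k) sequentially"
    unfolding AE_all_countable by (intro allI AE_eventually_sample_mean_close[OF h h_bound]) auto
  then show ?thesis
  proof (rule eventually_mono, intro tendstoI)
    fix s and e :: real
    assume close: "\<forall>k::nat. eventually
      (\<lambda>n. \<bar>sample_mean (\<lambda>m. X m s) n h - integral\<^sup>L P h\<bar> < 1 / Suc k) sequentially"
      and "e > 0"
    then obtain k where "1 / Suc k < e" using nat_approx_posE by blast
    with close[rule_format, of k] show
      "eventually (\<lambda>n. dist (sample_mean (\<lambda>m. X m s) n h) (integral\<^sup>L P h) < e) sequentially"
      by (auto elim!: eventually_mono simp: dist_real_def)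
  qed
qed

end

lemma norm_diff_le_norm_One:
  fixes u v :: "real ^ 'd"
  assumes "u \<in> unit_cube" "v \<in> unit_cube"
  shows "norm (u - v) \<le> norm (One :: real ^ 'd)"
proof (rule norm_le_componentwise_cart)
  fix i
  have "u $ i \<in> {0..1}" "v $ i \<in> {0..1}"
    using assms by (auto simp: unit_cube_def mem_box_cart Cart_1[symmetric])
  then show "norm ((u - v) $ i) \<le> norm ((One :: real ^ 'd) $ i)"
    by (auto simp: Cart_1[symmetric])
qed

lemma abs_power2_diff_le:
  fixes a b R :: real
  assumes "0 \<le> a" "a \<le> R" "0 \<le> b" "b \<le> R"
  shows "\<bar>a\<^sup>2 - b\<^sup>2\<bar> \<le> 2 * R * \<bar>a - b\<bar>"
proof -
  have "a\<^sup>2 - b\<^sup>2 = (a - b) * (a + b)"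
    by (simp add: power2_eq_square algebra_simps)
  then have "\<bar>a\<^sup>2 - b\<^sup>2\<bar> = \<bar>a - b\<bar> * (a + b)"
    using assms by (simp add: abs_mult)
  also have "\<dots> \<le> \<bar>a - b\<bar> * (2 * R)"
    using assms by (intro mult_left_mono) auto
  finally show ?thesis by (simp add: mult_ac)
qed

lemma voronoi_cell_subset_unit_cube: "voronoi_cell I x i \<subseteq> unit_cube"
  unfolding voronoi_cell_def by auto

lemma voronoi_cell_unique:
  assumes "i \<in> I" "k \<in> I" "\<omega> \<in> voronoi_cell I x i" "\<omega> \<in> voronoi_cell I x k"
  shows "i = k"
proof (rule ccontr)
  assume "i \<noteq> k"
  with assms have "norm (x i - \<omega>) < norm (x k - \<omega>) \<or> (norm (x i - \<omega>) = norm (x k - \<omega>) \<and> i < k)"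
    "norm (x k - \<omega>) < norm (x i - \<omega>) \<or> (norm (x k - \<omega>) = norm (x i - \<omega>) \<and> k < i)"
    unfolding voronoi_cell_def by auto
  then show False by auto
qed

lemma voronoi_cell_borel [measurable]:
  assumes "finite I"
  shows "voronoi_cell I x i \<in> sets borel"
proof -
  have "voronoi_cell I x i = unit_cube \<inter> {\<omega>. \<forall>k\<in>I. k \<noteq> i \<longrightarrow>
      (norm (x i - \<omega>) < norm (x k - \<omega>) \<or> (norm (x i - \<omega>) = norm (x k - \<omega>) \<and> i < k))}"
    unfolding voronoi_cell_def by auto
  also have "\<dots> \<in> sets borel"
    unfolding unit_cube_def using assms by measurable
  finally show ?thesis .
qed

definition distortion_loss ::
  "int list set \<Rightarrow> (int list \<Rightarrow> real) \<Rightarrow> (int list \<Rightarrow> real ^ 'd) \<Rightarrow> real ^ 'd \<Rightarrow> real" where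
  "distortion_loss I \<Lambda> x \<omega> = (\<Sum>i\<in>I. indicator (voronoi_cell I x i) \<omega> *
      (\<Sum>j\<in>I. \<Lambda> (idx_diff i j) * (norm (x j - \<omega>))\<^sup>2))"

lemma distortion_loss_borel [measurable]:
  "finite I \<Longrightarrow> distortion_loss I \<Lambda> x \<in> borel_measurable borel"
  unfolding distortion_loss_def by measurable

lemma distortion_loss_in_cell:
  assumes "finite I" "i \<in> I" "\<omega> \<in> voronoi_cell I x i"
  shows "distortion_loss I \<Lambda> x \<omega> = (\<Sum>j\<in>I. \<Lambda> (idx_diff i j) * (norm (x j - \<omega>))\<^sup>2)"
proof -
  define W where "W k = (\<Sum>j\<in>I. \<Lambda> (idx_diff k j) * (norm (x j - \<omega>))\<^sup>2)" for k
  have "indicator (voronoi_cell I x k) \<omega> = (0::real)" if "k \<in> I - {i}" for k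
    using that assms voronoi_cell_unique[of i I k \<omega> x] by (auto simp: indicator_def)
  then have "(\<Sum>k\<in>I - {i}. indicator (voronoi_cell I x k) \<omega> * W k) = 0"
    by simp
  moreover have "distortion_loss I \<Lambda> x \<omega>
      = indicator (voronoi_cell I x i) \<omega> * W i + (\<Sum>k\<in>I - {i}. indicator (voronoi_cell I x k) \<omega> * W k)"
    unfolding distortion_loss_def W_def using assms(1,2) by (rule sum.remove)
  ultimately show ?thesis
    using assms(3) by (simp add: W_def)
qed

lemma distortion_loss_outside_cells:
  "(\<And>i. i \<in> I \<Longrightarrow> \<omega> \<notin> voronoi_cell I x i) \<Longrightarrow> distortion_loss I \<Lambda> x \<omega> = 0"
  unfolding distortion_loss_def by simp

lemma distortion_loss_nonneg:
  assumes "\<And>i j. i \<in> I \<Longrightarrow> j \<in> I \<Longrightarrow> \<Lambda> (idx_diff i j) \<in> {0..1}"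
  shows "0 \<le> distortion_loss I \<Lambda> x \<omega>"
  unfolding distortion_loss_def using assms by (intro sum_nonneg mult_nonneg_nonneg) auto

lemma weighted_sum_sq_dist_le:
  fixes x :: "int list \<Rightarrow> real ^ 'd"
  assumes "\<And>j. j \<in> I \<Longrightarrow> \<Lambda> (idx_diff i j) \<in> {0..1}" "\<And>j. j \<in> I \<Longrightarrow> x j \<in> unit_cube"
    and "\<omega> \<in> unit_cube"
  shows "(\<Sum>j\<in>I. \<Lambda> (idx_diff i j) * (norm (x j - \<omega>))\<^sup>2) \<le> card I * (norm (One :: real ^ 'd))\<^sup>2"
proof -
  have "\<Lambda> (idx_diff i j) * (norm (x j - \<omega>))\<^sup>2 \<le> 1 * (norm (One :: real ^ 'd))\<^sup>2" if "j \<in> I" for j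
    using assms that norm_diff_le_norm_One[of "x j" \<omega>]
    by (intro mult_mono power_mono) auto
  then have "(\<Sum>j\<in>I. \<Lambda> (idx_diff i j) * (norm (x j - \<omega>))\<^sup>2) \<le> (\<Sum>j\<in>I. (norm (One :: real ^ 'd))\<^sup>2)"
    by (intro sum_mono) simp
  then show ?thesis by simp
qed

lemma distortion_loss_le:
  fixes x :: "int list \<Rightarrow> real ^ 'd"
  assumes "finite I" "\<And>i j. i \<in> I \<Longrightarrow> j \<in> I \<Longrightarrow> \<Lambda> (idx_diff i j) \<in> {0..1}"
    and "\<And>j. j \<in> I \<Longrightarrow> x j \<in> unit_cube"
  shows "distortion_loss I \<Lambda> x \<omega> \<le> card I * (norm (One :: real ^ 'd))\<^sup>2"
proof (cases "\<exists>i\<in>I. \<omega> \<in> voronoi_cell I x i")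
  case True
  then obtain i where "i \<in> I" "\<omega> \<in> voronoi_cell I x i" by blast
  moreover have "\<omega> \<in> unit_cube"
    using \<open>\<omega> \<in> voronoi_cell I x i\<close> voronoi_cell_subset_unit_cube by blast
  ultimately show ?thesis
    using assms by (simp add: distortion_loss_in_cell weighted_sum_sq_dist_le)
qed (simp add: distortion_loss_outside_cells)

definition near_bisectors :: "'i set \<Rightarrow> ('i \<Rightarrow> 'a::real_normed_vector) \<Rightarrow> real \<Rightarrow> 'a set" where
  "near_bisectors I x t = {\<omega>. \<exists>i\<in>I. \<exists>k\<in>I. i \<noteq> k \<and> \<bar>norm (x i - \<omega>) - norm (x k - \<omega>)\<bar> \<le> t}"

lemma near_bisectors_mono: "s \<le> t \<Longrightarrow> near_bisectors I x s \<subseteq> near_bisectors I x t"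
  unfolding near_bisectors_def by force

lemma near_bisectors_borel [measurable]:
  fixes x :: "'i \<Rightarrow> 'a::euclidean_space"
  assumes "finite I"
  shows "near_bisectors I x t \<in> sets borel"
  unfolding near_bisectors_def using assms by measurable

lemma voronoi_cell_perturb:
  assumes close: "\<And>i. i \<in> I \<Longrightarrow> dist (x i) (x0 i) < r"
    and far: "\<omega> \<notin> near_bisectors I x0 (2 * r)" and "i \<in> I"
  shows "\<omega> \<in> voronoi_cell I x i \<longleftrightarrow> \<omega> \<in> voronoi_cell I x0 i"
proof -
  have "norm (x i - \<omega>) < norm (x k - \<omega>) \<longleftrightarrow> norm (x0 i - \<omega>) < norm (x0 k - \<omega>)"
    "norm (x i - \<omega>) \<noteq> norm (x k - \<omega>)" "norm (x0 i - \<omega>) \<noteq> norm (x0 k - \<omega>)"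
    if "k \<in> I" "k \<noteq> i" for k
  proof -
    have "2 * r < \<bar>norm (x0 i - \<omega>) - norm (x0 k - \<omega>)\<bar>"
      using far \<open>i \<in> I\<close> that unfolding near_bisectors_def by force
    moreover have "\<bar>norm (x j - \<omega>) - norm (x0 j - \<omega>)\<bar> < r" if "j \<in> I" for j
      using norm_triangle_ineq3[of "x j - \<omega>" "x0 j - \<omega>"] close[OF that] by (simp add: dist_norm)
    ultimately show "norm (x i - \<omega>) < norm (x k - \<omega>) \<longleftrightarrow> norm (x0 i - \<omega>) < norm (x0 k - \<omega>)"
      "norm (x i - \<omega>) \<noteq> norm (x k - \<omega>)" "norm (x0 i - \<omega>) \<noteq> norm (x0 k - \<omega>)"
      using \<open>i \<in> I\<close> \<open>k \<in> I\<close> by (smt (verit))+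
  qed
  then show ?thesis
    unfolding voronoi_cell_def by auto
qed

text \<open>A Lipschitz part from moving the sites, plus a jump of at most twice the loss bound on
  the near-bisectors, where the Voronoi cell of \<open>\<omega>\<close> may change.\<close>

definition perturbation_bound ::
  "int list set \<Rightarrow> (int list \<Rightarrow> real ^ 'd) \<Rightarrow> real \<Rightarrow> real ^ 'd \<Rightarrow> real" where
  "perturbation_bound I x0 r \<omega> = card I * (2 * norm (One :: real ^ 'd)) * r
      + 2 * (card I * (norm (One :: real ^ 'd))\<^sup>2) * indicator (near_bisectors I x0 (2 * r)) \<omega>"

lemma perturbation_bound_borel [measurable]:
  "finite I \<Longrightarrow> perturbation_bound I x0 r \<in> borel_measurable borel"
  unfolding perturbation_bound_def by measurable

lemma perturbation_bound_nonneg: "0 \<le> r \<Longrightarrow> 0 \<le> perturbation_bound I x0 r \<omega>"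
  unfolding perturbation_bound_def by simp

lemma perturbation_bound_le:
  fixes x0 :: "int list \<Rightarrow> real ^ 'd"
  shows "perturbation_bound I x0 r \<omega> \<le> card I * (2 * norm (One :: real ^ 'd)) * r
      + 2 * (card I * (norm (One :: real ^ 'd))\<^sup>2)"
  unfolding perturbation_bound_def by (auto simp: indicator_def)

lemma distortion_loss_perturb:
  fixes x x0 :: "int list \<Rightarrow> real ^ 'd"
  assumes I: "finite I" and \<Lambda>: "\<And>i j. i \<in> I \<Longrightarrow> j \<in> I \<Longrightarrow> \<Lambda> (idx_diff i j) \<in> {0..1}"
    and cube: "\<And>j. j \<in> I \<Longrightarrow> x j \<in> unit_cube" "\<And>j. j \<in> I \<Longrightarrow> x0 j \<in> unit_cube"
    and "0 \<le> r" and close: "\<And>i. i \<in> I \<Longrightarrow> dist (x i) (x0 i) < r"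
  shows "\<bar>distortion_loss I \<Lambda> x \<omega> - distortion_loss I \<Lambda> x0 \<omega>\<bar> \<le> perturbation_bound I x0 r \<omega>"
proof -
  define R where "R = norm (One :: real ^ 'd)"
  consider "\<omega> \<in> near_bisectors I x0 (2 * r)"
    | i where "\<omega> \<notin> near_bisectors I x0 (2 * r)" "i \<in> I" "\<omega> \<in> voronoi_cell I x0 i"
    | "\<omega> \<notin> near_bisectors I x0 (2 * r)" "\<And>i. i \<in> I \<Longrightarrow> \<omega> \<notin> voronoi_cell I x0 i"
    by blast
  then show ?thesis
  proof cases
    case 1
    define K where "K = card I * R\<^sup>2"
    have "0 \<le> distortion_loss I \<Lambda> x \<omega>" "0 \<le> distortion_loss I \<Lambda> x0 \<omega>"
      using distortion_loss_nonneg[where \<Lambda>=\<Lambda>, OF \<Lambda>] by blast+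
    moreover have "distortion_loss I \<Lambda> x \<omega> \<le> K" "distortion_loss I \<Lambda> x0 \<omega> \<le> K"
      unfolding K_def R_def using distortion_loss_le[where \<Lambda>=\<Lambda>, OF I \<Lambda>] cube by blast+
    moreover have "K \<le> perturbation_bound I x0 r \<omega>"
      using 1 \<open>0 \<le> r\<close> by (simp add: perturbation_bound_def R_def K_def)
    ultimately show ?thesis by (simp add: abs_le_iff)
  next
    case (2 i)
    have \<omega>: "\<omega> \<in> voronoi_cell I x i" "\<omega> \<in> unit_cube"
      using voronoi_cell_perturb[OF close 2(1,2)] 2(3) voronoi_cell_subset_unit_cube by auto
    have "\<bar>distortion_loss I \<Lambda> x \<omega> - distortion_loss I \<Lambda> x0 \<omega>\<bar>
        = \<bar>\<Sum>j\<in>I. \<Lambda> (idx_diff i j) * ((norm (x j - \<omega>))\<^sup>2 - (norm (x0 j - \<omega>))\<^sup>2)\<bar>"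
      using 2 \<omega> I by (simp add: distortion_loss_in_cell sum_subtractf right_diff_distrib)
    also have "\<dots> \<le> (\<Sum>j\<in>I. 1 * (2 * R * r))"
    proof (intro order_trans[OF sum_abs] sum_mono)
      fix j assume "j \<in> I"
      have "\<bar>(norm (x j - \<omega>))\<^sup>2 - (norm (x0 j - \<omega>))\<^sup>2\<bar> \<le> 2 * R * \<bar>norm (x j - \<omega>) - norm (x0 j - \<omega>)\<bar>"
        using norm_diff_le_norm_One[OF cube(1) \<omega>(2)] norm_diff_le_norm_One[OF cube(2) \<omega>(2)] \<open>j \<in> I\<close>
        by (intro abs_power2_diff_le) (auto simp: R_def)
      also have "\<dots> \<le> 2 * R * r"
        using norm_triangle_ineq3[of "x j - \<omega>" "x0 j - \<omega>"] close[OF \<open>j \<in> I\<close>]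
        by (intro mult_left_mono) (auto simp: dist_norm R_def)
      finally show "\<bar>\<Lambda> (idx_diff i j) * ((norm (x j - \<omega>))\<^sup>2 - (norm (x0 j - \<omega>))\<^sup>2)\<bar> \<le> 1 * (2 * R * r)"
        using \<Lambda>[OF \<open>i \<in> I\<close> \<open>j \<in> I\<close>] by (simp add: abs_mult) (meson abs_ge_zero mult_left_le_one_le order_trans)
    qed
    also have "\<dots> \<le> perturbation_bound I x0 r \<omega>"
      by (simp add: perturbation_bound_def R_def mult_ac)
    finally show ?thesis .
  next
    case 3
    then have "\<And>i. i \<in> I \<Longrightarrow> \<omega> \<notin> voronoi_cell I x i"
      using voronoi_cell_perturb[OF close 3(1)] by simp
    then show ?thesis
      using 3 \<open>0 \<le> r\<close> by (simp add: distortion_loss_outside_cells perturbation_bound_nonneg)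
  qed
qed

lemma emp_distortion_eq_sample_mean:
  assumes "finite I"
  shows "emp_distortion I \<Lambda> w n x = sample_mean w n (distortion_loss I \<Lambda> x) / 2"
proof -
  define W where "W i \<omega> = (\<Sum>j\<in>I. \<Lambda> (idx_diff i j) * (norm (x j - \<omega>))\<^sup>2)" for i \<omega>
  have "(\<Sum>i\<in>I. \<Sum>m\<in>{m\<in>{1..n}. w m \<in> voronoi_cell I x i}. W i (w m))
      = (\<Sum>i\<in>I. \<Sum>m\<in>{1..n}. if w m \<in> voronoi_cell I x i then W i (w m) else 0)"
    by (rule sum.cong[OF refl], rule sum.inter_filter) simp
  also have "\<dots> = (\<Sum>m\<in>{1..n}. \<Sum>i\<in>I. if w m \<in> voronoi_cell I x i then W i (w m) else 0)"
    by (rule sum.swap)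
  also have "\<dots> = (\<Sum>m\<in>{1..n}. distortion_loss I \<Lambda> x (w m))"
    unfolding distortion_loss_def W_def by (intro sum.cong refl) (simp add: indicator_def)
  finally show ?thesis
    unfolding emp_distortion_def sample_mean_def W_def by simp
qed

lemma distortion_eq_integral:
  fixes x :: "int list \<Rightarrow> real ^ 'd" and P :: "(real ^ 'd) measure"
  assumes "finite I" "finite_measure P" "sets P = sets borel"
    and cube: "\<And>j. j \<in> I \<Longrightarrow> x j \<in> unit_cube"
  shows "distortion I \<Lambda> P x = integral\<^sup>L P (distortion_loss I \<Lambda> x) / 2"
proof -
  interpret finite_measure P by fact
  have [measurable]: "voronoi_cell I x i \<in> sets P" for i
    using assms by simp
  have "integrable P (\<lambda>\<omega>. indicator (voronoi_cell I x i) \<omega> * (norm (x j - \<omega>))\<^sup>2)" if "j \<in> I" for i j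
  proof (rule integrable_const_bound[where B="(norm (One :: real ^ 'd))\<^sup>2"])
    have "norm (x j - \<omega>) \<le> norm (One :: real ^ 'd)" if "\<omega> \<in> voronoi_cell I x i" for \<omega>
      using norm_diff_le_norm_One[OF cube[OF \<open>j \<in> I\<close>]] voronoi_cell_subset_unit_cube that by blast
    then show "AE \<omega> in P. norm (indicator (voronoi_cell I x i) \<omega> * (norm (x j - \<omega>))\<^sup>2)
        \<le> (norm (One :: real ^ 'd))\<^sup>2"
      by (intro AE_I2) (simp add: indicator_def power_mono)
    show "(\<lambda>\<omega>. indicator (voronoi_cell I x i) \<omega> * (norm (x j - \<omega>))\<^sup>2) \<in> borel_measurable P"
      using assms(3) by (simp add: measurable_def[of P] measurable_def[of borel]) measurable
  qed
  then have "integral\<^sup>L P (distortion_loss I \<Lambda> x) = (\<Sum>i\<in>I. \<Sum>j\<in>I. \<Lambda> (idx_diff i j) *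
      integral\<^sup>L P (\<lambda>\<omega>. indicator (voronoi_cell I x i) \<omega> * (norm (x j - \<omega>))\<^sup>2))"
    unfolding distortion_loss_def by (simp add: sum_distrib_left mult.left_commute integrable_sum)
  then show ?thesis
    unfolding distortion_def set_lebesgue_integral_def by simp
qed

lemma bisector_null_sets:
  fixes a b :: "'a::euclidean_space"
  assumes "a \<noteq> b"
  shows "{\<omega>. norm (a - \<omega>) = norm (b - \<omega>)} \<in> null_sets lborel"
proof -
  have "norm (a - \<omega>) = norm (b - \<omega>) \<longleftrightarrow> (a - \<omega>) \<bullet> (a - \<omega>) = (b - \<omega>) \<bullet> (b - \<omega>)" for \<omega>
    by (simp add: norm_eq)
  also have "\<dots> \<omega> \<longleftrightarrow> (2 *\<^sub>R (b - a)) \<bullet> \<omega> = b \<bullet> b - a \<bullet> a" for \<omega>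
    by (simp add: inner_diff_left inner_diff_right inner_commute algebra_simps)
  finally have "{\<omega>. norm (a - \<omega>) = norm (b - \<omega>)} = {\<omega>. (2 *\<^sub>R (b - a)) \<bullet> \<omega> = b \<bullet> b - a \<bullet> a}"
    by blast
  moreover have "negligible {\<omega>. (2 *\<^sub>R (b - a)) \<bullet> \<omega> = b \<bullet> b - a \<bullet> a}"
    using assms by (intro negligible_hyperplane) auto
  moreover have "{\<omega>. norm (a - \<omega>) = norm (b - \<omega>)} \<in> sets lborel"
    by measurable
  ultimately show ?thesis
    by (simp add: negligible_iff_null_sets null_sets_completion_iff)
qed

lemma measure_near_bisector_tendsto_0:
  fixes a b :: "'a::euclidean_space" and M :: "'a measure"
  assumes "finite_measure M" "sets M = sets borel" "absolutely_continuous lborel M" "a \<noteq> b"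
  shows "(\<lambda>n. measure M {\<omega>. \<bar>norm (a - \<omega>) - norm (b - \<omega>)\<bar> \<le> 1 / Suc n}) \<longlonglongrightarrow> 0"
proof -
  interpret finite_measure M by fact
  define A where "A n = {\<omega>. \<bar>norm (a - \<omega>) - norm (b - \<omega>)\<bar> \<le> 1 / Suc n}" for n
  have [measurable]: "A n \<in> sets M" for n
    unfolding A_def assms(2) by measurable
  have "decseq A"
    unfolding decseq_def A_def by (auto intro: order_trans[OF _ frac_le])
  then have "(\<lambda>n. measure M (A n)) \<longlonglongrightarrow> measure M (\<Inter>n. A n)"
    by (intro finite_Lim_measure_decseq) auto
  moreover have "(\<Inter>n. A n) = {\<omega>. norm (a - \<omega>) = norm (b - \<omega>)}"
  proof (intro equalityI subsetI)
    fix \<omega> assume "\<omega> \<in> (\<Inter>n. A n)"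
    then have "\<bar>norm (a - \<omega>) - norm (b - \<omega>)\<bar> \<le> 1 / Suc n" for n
      unfolding A_def by blast
    moreover have False if "0 < \<bar>norm (a - \<omega>) - norm (b - \<omega>)\<bar>"
      using nat_approx_posE[OF that] \<open>\<And>n. _ \<le> 1 / Suc n\<close> by (metis not_le)
    ultimately show "\<omega> \<in> {\<omega>. norm (a - \<omega>) = norm (b - \<omega>)}"
      by force
  qed (auto simp: A_def)
  moreover have "{\<omega>. norm (a - \<omega>) = norm (b - \<omega>)} \<in> null_sets M"
    using assms bisector_null_sets[OF \<open>a \<noteq> b\<close>] unfolding absolutely_continuous_def by blast
  ultimately show ?thesis
    unfolding A_def by (simp add: measure_eq_0_null_sets)
qed

lemma measure_near_bisectors_small:
  fixes x :: "'i \<Rightarrow> 'a::euclidean_space" and M :: "'a measure"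
  assumes "finite_measure M" "sets M = sets borel" "absolutely_continuous lborel M"
    and "finite I" "inj_on x I" "e > 0"
  shows "\<exists>t>0. measure M (near_bisectors I x t) < e"
proof -
  interpret finite_measure M by fact
  define pairs where "pairs = {p \<in> I \<times> I. fst p \<noteq> snd p}"
  define A where "A p n = {\<omega>. \<bar>norm (x (fst p) - \<omega>) - norm (x (snd p) - \<omega>)\<bar> \<le> 1 / Suc n}" for p n
  have "finite pairs" using \<open>finite I\<close> unfolding pairs_def by auto
  have A_sets: "A p n \<in> sets M" for p n
    unfolding A_def assms(2) by (intro borel_closed closed_Collect_le continuous_intros)
  have "(\<lambda>n. \<Sum>p\<in>pairs. measure M (A p n)) \<longlonglongrightarrow> 0"
  proof (rule tendsto_null_sum)
    fix p assume "p \<in> pairs"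
    then have "x (fst p) \<noteq> x (snd p)"
      using inj_on_contraD[OF \<open>inj_on x I\<close>] unfolding pairs_def by auto
    then show "(\<lambda>n. measure M (A p n)) \<longlonglongrightarrow> 0"
      unfolding A_def by (rule measure_near_bisector_tendsto_0[OF assms(1-3)])
  qed
  then have "eventually (\<lambda>n. (\<Sum>p\<in>pairs. measure M (A p n)) < e) sequentially"
    using \<open>e > 0\<close> by (rule order_tendstoD(2))
  then obtain n where n: "(\<Sum>p\<in>pairs. measure M (A p n)) < e"
    by (auto simp: eventually_sequentially)
  have "near_bisectors I x (1 / Suc n) = (\<Union>p\<in>pairs. A p n)"
    unfolding near_bisectors_def A_def pairs_def by force
  then have "measure M (near_bisectors I x (1 / Suc n)) \<le> (\<Sum>p\<in>pairs. measure M (A p n))"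
    using finite_measure_subadditive_finite[OF \<open>finite pairs\<close>, of "\<lambda>p. A p n"] A_sets
    by (simp add: image_subset_iff)
  with n show ?thesis
    by (intro exI[of _ "1 / Suc n"]) auto
qed

lemma open_coordinatewise_ball:
  fixes x0 :: "'i \<Rightarrow> 'a::metric_space"
  assumes "finite I"
  shows "open {x. \<forall>i\<in>I. dist (x i) (x0 i) < r}"
proof -
  have "{x. \<forall>i\<in>I. dist (x i) (x0 i) < r} = (\<Inter>i\<in>I. (\<lambda>x. x i) -` ball (x0 i) r)"
    by (auto simp: dist_commute)
  also have "open \<dots>"
    using assms by (intro open_INT ballI open_vimage continuous_on_product_coordinates) auto
  finally show ?thesis .
qed

lemma D_delta_unit_cube: "x \<in> D_delta I \<delta> \<Longrightarrow> i \<in> I \<Longrightarrow> x i \<in> unit_cube"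
  unfolding D_delta_def by auto

lemma D_delta_inj_on: "x \<in> D_delta I \<delta> \<Longrightarrow> 0 < \<delta> \<Longrightarrow> inj_on x I"
  unfolding D_delta_def inj_on_def by force

lemma compact_D_delta: "compact (D_delta I \<delta> :: (int list \<Rightarrow> real ^ 'd) set)"
proof -
  define S where "S i = (if i \<in> I then unit_cube else {0 :: real ^ 'd})" for i
  define pairs where "pairs = {p \<in> I \<times> I. fst p \<noteq> snd p}"
  have "compactin (product_topology (\<lambda>_. euclidean) UNIV) (PiE UNIV S)"
    unfolding compactin_PiE by (auto simp: S_def unit_cube_def)
  then have "compact (PiE UNIV S)"
    by (simp add: euclidean_product_topology)
  moreover have "closed (\<Inter>p\<in>pairs. {x :: int list \<Rightarrow> real ^ 'd. \<delta> \<le> dist (x (fst p)) (x (snd p))})"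
    by (intro closed_INT ballI closed_Collect_le continuous_on_const continuous_on_dist
        continuous_on_product_coordinates)
  moreover have "D_delta I \<delta> = PiE UNIV S \<inter> (\<Inter>p\<in>pairs. {x. \<delta> \<le> dist (x (fst p)) (x (snd p))})"
    unfolding D_delta_def S_def pairs_def by (auto simp: PiE_def Pi_def)
  ultimately show ?thesis
    by (simp add: compact_Int_closed)
qed

text \<open>If \<open>W n\<close> converges to \<open>V\<close> uniformly on a compact set, the minimizers of \<open>V\<close> on the
  closed set outside \<open>U\<close> exceed \<open>min V\<close> by a gap \<open>\<eta> > 0\<close>; once the uniform error and the
  tolerance \<open>1 / \<beta> n\<close> are below \<open>\<eta> / 3\<close>, no almost minimizer of \<open>W n\<close> can lie outside \<open>U\<close>.\<close>

lemma eventually_almost_minimizers_subset: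
  fixes V :: "'a::topological_space \<Rightarrow> real" and W :: "nat \<Rightarrow> 'a \<Rightarrow> real"
  assumes "compact D" "continuous_on D V" "uniform_limit D W V sequentially"
    and bdd: "\<And>n. bdd_below (W n ` D)" and \<beta>: "filterlim \<beta> at_top sequentially"
    and "open U" and argmin: "{x\<in>D. \<forall>z\<in>D. V x \<le> V z} \<subseteq> U"
  shows "eventually (\<lambda>n. {x\<in>D. W n x < (INF z\<in>D. W n z) + 1 / \<beta> n} \<subseteq> U) sequentially"
proof (cases "D \<subseteq> U")
  case True
  then show ?thesis by (intro always_eventually) auto
next
  case False
  have "compact (D - U)"
    using \<open>compact D\<close> \<open>open U\<close> by (simp add: Diff_eq compact_Int_closed closed_Compl)
  then obtain y where y: "y \<in> D - U" "\<And>z. z \<in> D - U \<Longrightarrow> V y \<le> V z"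
    using continuous_attains_inf[OF _ _ continuous_on_subset[OF \<open>continuous_on D V\<close>]] False
    by (metis Diff_eq_empty_iff Diff_subset)
  obtain x0 where x0: "x0 \<in> D" "\<And>z. z \<in> D \<Longrightarrow> V x0 \<le> V z"
    using continuous_attains_inf[OF \<open>compact D\<close> _ \<open>continuous_on D V\<close>] y(1) by blast
  define \<eta> where "\<eta> = V y - V x0"
  have "\<eta> > 0"
  proof -
    have "y \<notin> {x\<in>D. \<forall>z\<in>D. V x \<le> V z}" using y(1) argmin by blast
    then obtain z where "z \<in> D" "V z < V y" using y(1) by auto
    then show ?thesis using x0 unfolding \<eta>_def by force
  qed
  have "eventually (\<lambda>n. \<forall>x\<in>D. dist (W n x) (V x) < \<eta> / 3) sequentially"
    using \<open>uniform_limit D W V sequentially\<close> \<open>\<eta> > 0\<close> by (intro uniform_limitD) auto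
  moreover have "eventually (\<lambda>n. 3 / \<eta> < \<beta> n) sequentially"
    using \<beta> by (simp add: filterlim_at_top_dense)
  ultimately show ?thesis
  proof eventually_elim
    case (elim n)
    have "0 < \<beta> n"
      using elim(2) \<open>\<eta> > 0\<close> by (smt (verit) divide_pos_pos)
    then have tol: "1 / \<beta> n < \<eta> / 3"
      using elim(2) \<open>\<eta> > 0\<close> by (simp add: field_simps)
    have inf: "(INF z\<in>D. W n z) \<le> W n x0"
      using x0(1) bdd by (rule cINF_lower[rotated])
    have err: "\<bar>W n x - V x\<bar> < \<eta> / 3" if "x \<in> D" for x
      using elim(1) that by (simp add: dist_real_def)
    show ?case
    proof (rule subsetI, rule ccontr)
      fix x assume x: "x \<in> {x\<in>D. W n x < (INF z\<in>D. W n z) + 1 / \<beta> n}" "x \<notin> U"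
      then have "V y \<le> V x" using y(2) by blast
      with x tol inf err[of x] err[OF x0(1)] show False
        unfolding \<eta>_def abs_less_iff by auto
    qed
  qed
qed

lemma abs_diff_le_three:
  fixes a b a0 b0 :: real
  shows "\<bar>a - b\<bar> \<le> \<bar>a - a0\<bar> + \<bar>a0 - b0\<bar> + \<bar>b - b0\<bar>"
  by linarith

locale quantization_sample = iid_sequence M \<omega> P
  for M :: "'s measure" and \<omega> :: "nat \<Rightarrow> 's \<Rightarrow> real ^ 'd" and P +
  fixes I :: "int list set" and \<Lambda> :: "int list \<Rightarrow> real" and \<delta> :: real
  assumes finite_I: "finite I"
    and \<Lambda>_range: "\<And>i j. i \<in> I \<Longrightarrow> j \<in> I \<Longrightarrow> \<Lambda> (idx_diff i j) \<in> {0..1}"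
    and \<delta>_pos: "0 < \<delta>"
    and absolutely_continuous_P: "absolutely_continuous lborel P"
begin

abbreviation D :: "(int list \<Rightarrow> real ^ 'd) set" where "D \<equiv> D_delta I \<delta>"
abbreviation V where "V \<equiv> distortion I \<Lambda> P"
abbreviation V_emp where "V_emp s n \<equiv> emp_distortion I \<Lambda> (\<lambda>m. \<omega> m s) n"
abbreviation loss where "loss \<equiv> distortion_loss I \<Lambda>"

lemma sets_P [measurable_cong, simp]: "sets P = sets borel"
  using distr_X[of 0] by (metis sets_distr)

lemma prob_space_P: "prob_space P"
  using prob_space_distr[of "\<omega> 0" borel] by (simp add: distr_X)

interpretation P: prob_space P
  by (rule prob_space_P)

lemma loss_nonneg: "0 \<le> loss x y"
  using \<Lambda>_range by (rule distortion_loss_nonneg)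

lemma loss_abs_le:
  assumes "x \<in> D"
  shows "\<bar>loss x y\<bar> \<le> card I * (norm (One :: real ^ 'd))\<^sup>2"
proof -
  have "loss x y \<le> card I * (norm (One :: real ^ 'd))\<^sup>2"
    using finite_I \<Lambda>_range D_delta_unit_cube[OF assms] by (rule distortion_loss_le)
  with loss_nonneg[of x y] show ?thesis by simp
qed

lemma integrable_loss: "x \<in> D \<Longrightarrow> integrable P (loss x)"
  using finite_I loss_abs_le
  by (intro P.integrable_const_bound[where B="card I * (norm (One :: real ^ 'd))\<^sup>2"]) auto

lemma perturbation_bound_abs_le:
  fixes x0 :: "int list \<Rightarrow> real ^ 'd"
  assumes "0 \<le> r"
  shows "\<bar>perturbation_bound I x0 r y\<bar>
    \<le> card I * (2 * norm (One :: real ^ 'd)) * r + 2 * (card I * (norm (One :: real ^ 'd))\<^sup>2)"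
  by (subst abs_of_nonneg[OF perturbation_bound_nonneg[OF assms]]) (rule perturbation_bound_le)

lemma integrable_perturbation_bound:
  fixes x0 :: "int list \<Rightarrow> real ^ 'd"
  shows "0 \<le> r \<Longrightarrow> integrable P (perturbation_bound I x0 r)"
  using finite_I perturbation_bound_abs_le
  by (intro P.integrable_const_bound[where
        B="card I * (2 * norm (One :: real ^ 'd)) * r + 2 * (card I * (norm (One :: real ^ 'd))\<^sup>2)"])
    auto

lemma distortion_eq_integral_loss: "x \<in> D \<Longrightarrow> V x = integral\<^sup>L P (loss x) / 2"
  using finite_I P.finite_measure_axioms D_delta_unit_cube by (intro distortion_eq_integral) auto

lemma V_emp_eq_sample_mean: "V_emp s n x = sample_mean (\<lambda>m. \<omega> m s) n (loss x) / 2"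
  using finite_I by (rule emp_distortion_eq_sample_mean)

lemma integral_perturbation_bound:
  fixes x0 :: "int list \<Rightarrow> real ^ 'd"
  shows "integral\<^sup>L P (perturbation_bound I x0 r) = card I * (2 * norm (One :: real ^ 'd)) * r
    + 2 * (card I * (norm (One :: real ^ 'd))\<^sup>2) * measure P (near_bisectors I x0 (2 * r))"
proof -
  have "near_bisectors I x0 (2 * r) \<in> sets P"
    using finite_I by simp
  then have "integrable P (indicator (near_bisectors I x0 (2 * r)) :: _ \<Rightarrow> real)"
    by (intro integrable_real_indicator) (auto simp: P.emeasure_eq_measure)
  then show ?thesis
    unfolding perturbation_bound_def using \<open>near_bisectors I x0 (2 * r) \<in> sets P\<close>
    by (simp add: P.prob_space)
qed

lemma exists_perturbation_radius:
  assumes "x0 \<in> D" "0 < e"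
  shows "\<exists>r>0. integral\<^sup>L P (perturbation_bound I x0 r) < e"
proof -
  define L where "L = card I * (2 * norm (One :: real ^ 'd))"
  define K where "K = card I * (norm (One :: real ^ 'd))\<^sup>2"
  have "0 \<le> L" "0 \<le> K" by (simp_all add: L_def K_def)
  then have "0 < e / (2 * (2 * K + 1))" using \<open>0 < e\<close> by simp
  then obtain t where t: "0 < t" "measure P (near_bisectors I x0 t) < e / (2 * (2 * K + 1))"
    using measure_near_bisectors_small[OF P.finite_measure_axioms sets_P absolutely_continuous_P
        finite_I D_delta_inj_on[OF \<open>x0 \<in> D\<close> \<delta>_pos]] by blast
  define r where "r = min (t / 2) (e / (2 * (L + 1)))"
  have "0 < r" using t \<open>0 < e\<close> \<open>0 \<le> L\<close> by (simp add: r_def)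
  have "measure P (near_bisectors I x0 (2 * r)) \<le> measure P (near_bisectors I x0 t)"
    using finite_I near_bisectors_mono[of "2 * r" t I x0]
    by (intro P.finite_measure_mono) (auto simp: r_def)
  then have "2 * K * measure P (near_bisectors I x0 (2 * r)) \<le> 2 * K * (e / (2 * (2 * K + 1)))"
    using t \<open>0 \<le> K\<close> by (intro mult_left_mono) auto
  also have "\<dots> \<le> e / 2"
    using \<open>0 \<le> K\<close> \<open>0 < e\<close> by (simp add: field_simps)
  finally have "2 * K * measure P (near_bisectors I x0 (2 * r)) \<le> e / 2" .
  moreover have "L * r \<le> L * (e / (2 * (L + 1)))"
    using \<open>0 \<le> L\<close> by (intro mult_left_mono) (auto simp: r_def)
  moreover have "L * (e / (2 * (L + 1))) < e / 2"
    using \<open>0 \<le> L\<close> \<open>0 < e\<close> by (simp add: field_simps)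
  ultimately have "integral\<^sup>L P (perturbation_bound I x0 r) < e"
    unfolding integral_perturbation_bound L_def K_def by linarith
  with \<open>0 < r\<close> show ?thesis by blast
qed

lemma loss_perturb:
  assumes "x \<in> D" "x0 \<in> D" "0 \<le> r" "\<And>i. i \<in> I \<Longrightarrow> dist (x i) (x0 i) < r"
  shows "\<bar>loss x y - loss x0 y\<bar> \<le> perturbation_bound I x0 r y"
  using finite_I \<Lambda>_range D_delta_unit_cube[OF assms(1)] D_delta_unit_cube[OF assms(2)] assms(3,4)
  by (rule distortion_loss_perturb)

lemma distortion_perturb:
  assumes "x \<in> D" "x0 \<in> D" "0 \<le> r" "\<And>i. i \<in> I \<Longrightarrow> dist (x i) (x0 i) < r"
  shows "\<bar>V x - V x0\<bar> \<le> integral\<^sup>L P (perturbation_bound I x0 r) / 2"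
proof -
  have "\<bar>integral\<^sup>L P (loss x) - integral\<^sup>L P (loss x0)\<bar> = \<bar>integral\<^sup>L P (\<lambda>y. loss x y - loss x0 y)\<bar>"
    using integrable_loss[OF assms(1)] integrable_loss[OF assms(2)] by simp
  also have "\<dots> \<le> integral\<^sup>L P (perturbation_bound I x0 r)"
    using integrable_loss[OF assms(1)] integrable_loss[OF assms(2)]
      integrable_perturbation_bound[OF assms(3)] loss_perturb[OF assms]
    by (intro integral_abs_bound_integral) auto
  finally show ?thesis
    using assms(1,2) by (simp add: distortion_eq_integral_loss flip: diff_divide_distrib)
qed

lemma emp_distortion_perturb:
  assumes "x \<in> D" "x0 \<in> D" "0 \<le> r" "\<And>i. i \<in> I \<Longrightarrow> dist (x i) (x0 i) < r"
  shows "\<bar>V_emp s n x - V_emp s n x0\<bar> \<le> sample_mean (\<lambda>m. \<omega> m s) n (perturbation_bound I x0 r) / 2"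
  using sample_mean_abs_diff_le[OF loss_perturb[OF assms]]
  by (simp add: V_emp_eq_sample_mean flip: diff_divide_distrib)

lemma continuous_on_distortion: "continuous_on D V"
  unfolding continuous_on_def
proof (intro ballI tendstoI)
  fix x0 and e :: real assume "x0 \<in> D" "0 < e"
  then obtain r where r: "0 < r" "integral\<^sup>L P (perturbation_bound I x0 r) < e"
    using exists_perturbation_radius by blast
  have "\<bar>V x - V x0\<bar> < e" if "x \<in> D" "\<forall>i\<in>I. dist (x i) (x0 i) < r" for x
  proof -
    have "\<bar>V x - V x0\<bar> \<le> integral\<^sup>L P (perturbation_bound I x0 r) / 2"
      using that \<open>x0 \<in> D\<close> r(1) by (intro distortion_perturb) auto
    with r(2) \<open>0 < e\<close> show ?thesis by linarith
  qed
  then show "eventually (\<lambda>x. dist (V x) (V x0) < e) (at x0 within D)"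
    unfolding eventually_at_topological dist_real_def
    using open_coordinatewise_ball[OF finite_I, of x0 r] \<open>0 < r\<close> by auto
qed

definition error_majorant :: "'s \<Rightarrow> nat \<Rightarrow> (int list \<Rightarrow> real ^ 'd) \<Rightarrow> real \<Rightarrow> real" where
  "error_majorant s n x0 r = \<bar>V_emp s n x0 - V x0\<bar>
     + (sample_mean (\<lambda>m. \<omega> m s) n (perturbation_bound I x0 r) + integral\<^sup>L P (perturbation_bound I x0 r)) / 2"

lemma emp_distortion_error_le_majorant:
  assumes "x \<in> D" "x0 \<in> D" "0 \<le> r" "\<And>i. i \<in> I \<Longrightarrow> dist (x i) (x0 i) < r"
  shows "\<bar>V_emp s n x - V x\<bar> \<le> error_majorant s n x0 r"
proof -
  have "\<bar>V_emp s n x - V_emp s n x0\<bar> \<le> sample_mean (\<lambda>m. \<omega> m s) n (perturbation_bound I x0 r) / 2"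
    using assms by (rule emp_distortion_perturb)
  moreover have "\<bar>V x - V x0\<bar> \<le> integral\<^sup>L P (perturbation_bound I x0 r) / 2"
    using assms by (rule distortion_perturb)
  moreover have "\<bar>V_emp s n x - V x\<bar>
      \<le> \<bar>V_emp s n x - V_emp s n x0\<bar> + \<bar>V_emp s n x0 - V x0\<bar> + \<bar>V x - V x0\<bar>"
    by (rule abs_diff_le_three)
  ultimately show ?thesis
    unfolding error_majorant_def by argo
qed

lemma AE_error_majorant_tendsto:
  assumes "x0 \<in> D" "0 \<le> r"
  shows "AE s in M. (\<lambda>n. error_majorant s n x0 r) \<longlonglongrightarrow> integral\<^sup>L P (perturbation_bound I x0 r)"
proof -
  have "AE s in M. (\<lambda>n. sample_mean (\<lambda>m. \<omega> m s) n (loss x0)) \<longlonglongrightarrow> integral\<^sup>L P (loss x0)"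
    using finite_I loss_abs_le[OF assms(1)] by (intro AE_sample_mean_tendsto) auto
  moreover have "AE s in M. (\<lambda>n. sample_mean (\<lambda>m. \<omega> m s) n (perturbation_bound I x0 r))
      \<longlonglongrightarrow> integral\<^sup>L P (perturbation_bound I x0 r)"
    using finite_I perturbation_bound_abs_le[OF assms(2)] by (intro AE_sample_mean_tendsto) auto
  ultimately show ?thesis
  proof eventually_elim
    case (elim s)
    have "(\<lambda>n. V_emp s n x0) \<longlonglongrightarrow> V x0"
      unfolding V_emp_eq_sample_mean distortion_eq_integral_loss[OF assms(1)]
      by (intro tendsto_intros elim(1)) simp
    then have "(\<lambda>n. \<bar>V_emp s n x0 - V x0\<bar>) \<longlonglongrightarrow> 0"
      by (intro tendsto_rabs_zero LIM_zero)
    then have "(\<lambda>n. error_majorant s n x0 r) \<longlonglongrightarrow>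
        0 + (integral\<^sup>L P (perturbation_bound I x0 r) + integral\<^sup>L P (perturbation_bound I x0 r)) / 2"
      unfolding error_majorant_def by (intro tendsto_intros elim(2)) simp_all
    then show ?case by simp
  qed
qed

text \<open>Compactness reduces uniform convergence to convergence of the majorants at the finitely
  many centres of a cover of \<open>D\<close>, one cover for each tolerance \<open>1 / Suc k\<close>.\<close>

lemma AE_uniform_limit_emp_distortion: "AE s in M. uniform_limit D (V_emp s) V sequentially"
proof -
  define rad where "rad k x0 = (SOME r. 0 < r \<and> integral\<^sup>L P (perturbation_bound I x0 r) < 1 / Suc k)"
    for k :: nat and x0
  have rad: "0 < rad k x0 \<and> integral\<^sup>L P (perturbation_bound I x0 (rad k x0)) < 1 / Suc k"
    if "x0 \<in> D" for k x0
    unfolding rad_def by (rule someI_ex) (use exists_perturbation_radius[OF that] in simp)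
  define ball where "ball k x0 = {x. \<forall>i\<in>I. dist (x i) (x0 i) < rad k x0}" for k x0
  have "\<exists>F\<subseteq>D. finite F \<and> D \<subseteq> (\<Union>x0\<in>F. ball k x0)" for k
  proof (rule compactE_image[OF compact_D_delta])
    show "open (ball k x0)" for x0
      unfolding ball_def using finite_I by (rule open_coordinatewise_ball)
    show "D \<subseteq> (\<Union>x0\<in>D. ball k x0)"
      using rad by (force simp: ball_def)
  qed blast
  then obtain F where F: "\<And>k. F k \<subseteq> D" "\<And>k. finite (F k)" "\<And>k. D \<subseteq> (\<Union>x0\<in>F k. ball k x0)"
    by metis
  have rad_F: "0 \<le> rad k x0 \<and> integral\<^sup>L P (perturbation_bound I x0 (rad k x0)) < 1 / Suc k"
    if "x0 \<in> F k" for k x0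
  proof -
    have "x0 \<in> D" using F(1) that by blast
    then show ?thesis using rad[of x0 k] by simp
  qed
  have "AE s in M. \<forall>k. \<forall>x0\<in>F k.
      (\<lambda>n. error_majorant s n x0 (rad k x0)) \<longlonglongrightarrow> integral\<^sup>L P (perturbation_bound I x0 (rad k x0))"
    unfolding AE_all_countable
    using F(1,2) rad_F by (intro allI AE_finite_allI AE_error_majorant_tendsto) auto
  then show ?thesis
  proof (rule eventually_mono, intro uniform_limitI)
    fix s and e :: real
    assume conv: "\<forall>k. \<forall>x0\<in>F k.
      (\<lambda>n. error_majorant s n x0 (rad k x0)) \<longlonglongrightarrow> integral\<^sup>L P (perturbation_bound I x0 (rad k x0))"
      and "0 < e"
    then obtain k where k: "1 / Suc k < e" using nat_approx_posE by blast
    have "eventually (\<lambda>n. \<forall>x0\<in>F k. error_majorant s n x0 (rad k x0) < 1 / Suc k) sequentially"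
      using conv rad_F by (intro eventually_ball_finite F(2) ballI order_tendstoD(2)) auto
    then show "eventually (\<lambda>n. \<forall>x\<in>D. dist (V_emp s n x) (V x) < e) sequentially"
    proof (rule eventually_mono, intro ballI)
      fix n x
      assume small: "\<forall>x0\<in>F k. error_majorant s n x0 (rad k x0) < 1 / Suc k" and "x \<in> D"
      then obtain x0 where "x0 \<in> F k" "x \<in> ball k x0" using F(3) by blast
      then have "\<bar>V_emp s n x - V x\<bar> \<le> error_majorant s n x0 (rad k x0)"
        using \<open>x \<in> D\<close> F(1) rad_F by (intro emp_distortion_error_le_majorant) (auto simp: ball_def)
      with small[rule_format, OF \<open>x0 \<in> F k\<close>] k show "dist (V_emp s n x) (V x) < e"
        unfolding dist_real_def by linarith
    qed
  qed
qed

theorem strong_consistency: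
  assumes "open U" "argmin_set I \<delta> \<Lambda> P \<subseteq> U" "filterlim \<beta> at_top sequentially"
  shows "AE s in M. eventually (\<lambda>n. almost_min_set I \<delta> \<Lambda> (\<lambda>m. \<omega> m s) \<beta> n \<subseteq> U) sequentially"
  using AE_uniform_limit_emp_distortion
proof (rule eventually_mono)
  fix s assume "uniform_limit D (V_emp s) V sequentially"
  moreover have "bdd_below (V_emp s n ` D)" for n
    by (intro bdd_belowI2[where m=0]) (simp add: V_emp_eq_sample_mean sample_mean_nonneg[OF loss_nonneg])
  ultimately show "eventually (\<lambda>n. almost_min_set I \<delta> \<Lambda> (\<lambda>m. \<omega> m s) \<beta> n \<subseteq> U) sequentially"
    using eventually_almost_minimizers_subset[OF compact_D_delta continuous_on_distortion] assms
    unfolding almost_min_set_def argmin_set_def by blast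
qed

end

theorem mainTheorem2:
  fixes M :: "'s measure" and \<omega> :: "nat \<Rightarrow> 's \<Rightarrow> real ^ 'd"
    and e :: nat and I :: "int list set" and \<Lambda> :: "int list \<Rightarrow> real"
    and \<delta> B :: real and f :: "real ^ 'd \<Rightarrow> real" and \<beta> :: "nat \<Rightarrow> real"
  assumes e: "1 \<le> e" "e \<le> CARD('d)"
    and I: "finite I" "\<forall>i\<in>I. length i = e"
    and Lam_range: "\<forall>k\<in>diff_set I. 0 \<le> \<Lambda> k \<and> \<Lambda> k \<le> 1"
    and Lam_sym: "\<forall>k\<in>diff_set I. \<Lambda> k = \<Lambda> (idx_neg k)"
    and Lam_0: "\<Lambda> (replicate e 0) = 1"
    and delta: "\<delta> > 0" and D_ne: "D_delta I \<delta> \<noteq> {}"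
    and M: "prob_space M"
    and indep: "prob_space.indep_vars M (\<lambda>_. borel) \<omega> UNIV"
    and in_cube: "\<forall>m. \<forall>s\<in>space M. \<omega> m s \<in> unit_cube"
    and f_meas: "f \<in> borel_measurable lborel"
    and f_bnd: "B > 0" "\<forall>y. 0 \<le> f y \<and> f y \<le> B"
    and law: "\<forall>m. distr M borel (\<omega> m) = density lborel (\<lambda>y. ennreal (f y))"
    and beta_pos: "\<forall>n\<ge>1. \<beta> n > 0"
    and beta_lim: "filterlim \<beta> at_top sequentially"
  shows "\<forall>U. open U \<and> argmin_set I \<delta> \<Lambda> (density lborel (\<lambda>y. ennreal (f y))) \<subseteq> U \<longrightarrow>
           (AE s in M. eventually (\<lambda>n. almost_min_set I \<delta> \<Lambda> (\<lambda>m. \<omega> m s) \<beta> n \<subseteq> U) sequentially)"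
proof -
  have \<Lambda>_range: "\<Lambda> (idx_diff i j) \<in> {0..1}" if "i \<in> I" "j \<in> I" for i j
  proof -
    have "idx_diff i j \<in> diff_set I"
      unfolding diff_set_def using that by blast
    with Lam_range show ?thesis by simp
  qed
  have ac: "absolutely_continuous lborel (density lborel (\<lambda>y. ennreal (f y)))"
    using f_meas by (intro absolutely_continuousI_density) (simp add: measurable_lborel1)
  interpret quantization_sample M \<omega> "density lborel (\<lambda>y. ennreal (f y))" I \<Lambda> \<delta>
    using law by (intro quantization_sample.intro iid_sequence.intro iid_sequence_axioms.intro
        quantization_sample_axioms.intro M indep I(1) \<Lambda>_range delta ac) auto
  show ?thesis
    using strong_consistency[OF _ _ beta_lim] by blast
qed

end
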